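(* Let $n \ge 1$, let $Q \ge 0$, let $\alpha \ge 0$, and let $q_1,\dots,q_n \ge 0$ be demands. Let $d_{i,i+1}$ ($1 \le i \le n-1$), $d_{0,i}$ and $d_{i,0}$ ($1 \le i \le n$) be real numbers. For $1 \le i \le n$ put $D[i] = \sum_{k=1}^{i-1} d_{k,k+1}$ and $Q[i] = \sum_{k=1}^{i} q_k$, with $Q[0]=0$. Let $\mathcal{G}$ be the directed acyclic graph with vertex set $\{0,1,\dots,n\}$ and an arc $(i,j)$ for every $0 \le i<j \le n$, with cost $$c(i,j) = d_{0,i+1} + D[j] - D[i+1] + d_{j,0} + \alpha \max\{Q[j]-Q[i]-Q,\,0\}.$$ Then there is an algorithm that computes a minimum-cost path from $0$ to $n$ in $\mathcal{G}$ (together with its cost) in $\mathcal{O}(n)$ time.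
   Context: This is the "Split" problem with soft capacity constraints for the vehicle routing problem: customers $1,\dots,n$ are given in a fixed order (a "giant tour"), $d_{0,i}$ and $d_{i,0}$ are the distances from the depot to customer $i$ and back, $d_{i,i+1}$ is the distance between consecutive customers, and an arc $(i,j)$ represents a route leaving the depot, visiting customers $i+1,\dots,j$ in order and returning to the depot; exceeding the vehicle capacity $Q$ is allowed but penalized linearly with coefficient $\alpha$. Running time is measured in the model where arithmetic operations and comparisons on reals take constant time. *)

theory Defs
  imports Complex_Main
begin

text \<open>Arithmetic on reals (+,-,*,/) and comparisons of reals take unit
time, as do addition/subtraction/comparison of natural-number addresses and counters.
There is no floor/conversion operation, so no bit-packing tricks are possible.\<close>

record st =
  nmem :: "nat \<times> nat \<Rightarrow> nat"
  rmem :: "nat \<times> nat \<Rightarrow> real"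

datatype nexp = NC nat | NL nat nexp | NAdd nexp nexp | NSub nexp nexp

datatype rexp = RC real | RL nat nexp | RAdd rexp rexp | RSub rexp rexp
  | RMul rexp rexp | RDiv rexp rexp

datatype bexp = NLess nexp nexp | NEq nexp nexp | RLess rexp rexp | RLe rexp rexp
  | BNot bexp | BAnd bexp bexp | BOr bexp bexp

datatype com = Skip
  | NAssign nat nexp nexp
  | RAssign nat nexp rexp
  | Seq com com
  | If bexp com com
  | While bexp com

fun neval :: "nexp \<Rightarrow> st \<Rightarrow> nat" where
  "neval (NC c) s = c"
| "neval (NL k e) s = nmem s (k, neval e s)"
| "neval (NAdd a b) s = neval a s + neval b s"
| "neval (NSub a b) s = neval a s - neval b s"

fun reval :: "rexp \<Rightarrow> st \<Rightarrow> real" where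
  "reval (RC c) s = c"
| "reval (RL k e) s = rmem s (k, neval e s)"
| "reval (RAdd a b) s = reval a s + reval b s"
| "reval (RSub a b) s = reval a s - reval b s"
| "reval (RMul a b) s = reval a s * reval b s"
| "reval (RDiv a b) s = reval a s / reval b s"

fun beval :: "bexp \<Rightarrow> st \<Rightarrow> bool" where
  "beval (NLess a b) s = (neval a s < neval b s)"
| "beval (NEq a b) s = (neval a s = neval b s)"
| "beval (RLess a b) s = (reval a s < reval b s)"
| "beval (RLe a b) s = (reval a s \<le> reval b s)"
| "beval (BNot b) s = (\<not> beval b s)"
| "beval (BAnd a b) s = (beval a s \<and> beval b s)"
| "beval (BOr a b) s = (beval a s \<or> beval b s)"

inductive exec :: "com \<Rightarrow> st \<Rightarrow> nat \<Rightarrow> st \<Rightarrow> bool" where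
  Skip: "exec Skip s 1 s"
| NAssign: "exec (NAssign k e v) s 1
     (s\<lparr>nmem := (nmem s)((k, neval e s) := neval v s)\<rparr>)"
| RAssign: "exec (RAssign k e v) s 1
     (s\<lparr>rmem := (rmem s)((k, neval e s) := reval v s)\<rparr>)"
| Seq: "exec c1 s t1 s1 \<Longrightarrow> exec c2 s1 t2 s2 \<Longrightarrow> exec (Seq c1 c2) s (t1 + t2) s2"
| IfT: "beval b s \<Longrightarrow> exec c1 s t s' \<Longrightarrow> exec (If b c1 c2) s (t + 1) s'"
| IfF: "\<not> beval b s \<Longrightarrow> exec c2 s t s' \<Longrightarrow> exec (If b c1 c2) s (t + 1) s'"
| WhileF: "\<not> beval b s \<Longrightarrow> exec (While b c) s 1 s"
| WhileT: "beval b s \<Longrightarrow> exec c s t1 s1 \<Longrightarrow> exec (While b c) s1 t2 s2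
     \<Longrightarrow> exec (While b c) s (t1 + t2 + 1) s2"

text \<open>Input: n, Q, alpha, demands q i (1..n), depot distances d0 i = d_{0,i},
dback i = d_{i,0} (1..n), consecutive distances dnext i = d_{i,i+1} (1..n-1).\<close>

definition Dpre :: "(nat \<Rightarrow> real) \<Rightarrow> nat \<Rightarrow> real" where
  "Dpre dnext i = (\<Sum>k = 1..<i. dnext k)"

definition Qpre :: "(nat \<Rightarrow> real) \<Rightarrow> nat \<Rightarrow> real" where
  "Qpre q i = (\<Sum>k = 1..i. q k)"

definition arc_cost :: "real \<Rightarrow> real \<Rightarrow> (nat \<Rightarrow> real) \<Rightarrow> (nat \<Rightarrow> real) \<Rightarrow>
    (nat \<Rightarrow> real) \<Rightarrow> (nat \<Rightarrow> real) \<Rightarrow> nat \<Rightarrow> nat \<Rightarrow> real" where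
  "arc_cost Q \<alpha> q d0 dback dnext i j =
     d0 (i + 1) + Dpre dnext j - Dpre dnext (i + 1) + dback j
     + \<alpha> * max (Qpre q j - Qpre q i - Q) 0"

text \<open>A path from 0 to n in the DAG G (arcs (i,j) for 0 \<le> i < j \<le> n), as its vertex list.\<close>
definition is_path :: "nat \<Rightarrow> nat list \<Rightarrow> bool" where
  "is_path n p \<longleftrightarrow> p \<noteq> [] \<and> hd p = 0 \<and> last p = n \<and> sorted_wrt (<) p"

definition path_cost :: "(nat \<Rightarrow> nat \<Rightarrow> real) \<Rightarrow> nat list \<Rightarrow> real" where
  "path_cost c p = (\<Sum>(i, j) \<leftarrow> zip p (tl p). c i j)"

definition init_state :: "nat \<Rightarrow> real \<Rightarrow> real \<Rightarrow> (nat \<Rightarrow> real) \<Rightarrow> (nat \<Rightarrow> real) \<Rightarrow>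
    (nat \<Rightarrow> real) \<Rightarrow> (nat \<Rightarrow> real) \<Rightarrow> st" where
  "init_state n Q \<alpha> q d0 dback dnext =
     \<lparr> nmem = (\<lambda>_. 0)((0, 0) := n),
       rmem = (\<lambda>(a, i).
          if a = 0 \<and> i = 0 then Q
          else if a = 0 \<and> i = 1 then \<alpha>
          else if a = 1 \<and> 1 \<le> i \<and> i \<le> n then q i
          else if a = 2 \<and> 1 \<le> i \<and> i \<le> n then d0 i
          else if a = 3 \<and> 1 \<le> i \<and> i \<le> n then dback i
          else if a = 4 \<and> 1 \<le> i \<and> i < n then dnext i
          else 0) \<rparr>"

definition out_path :: "st \<Rightarrow> nat list" where
  "out_path s = map (\<lambda>k. nmem s (3, k)) [0..<nmem s (2, 0) + 1]"

definition out_cost :: "st \<Rightarrow> real" where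
  "out_cost s = rmem s (5, 0)"

end

theory Submission
  imports Defs
begin

text \<open>Let P[i] be the cost of a cheapest path from 0 to i.  Writing
  c(i,j) = (D[j] + d_{j,0}) + F[i] + \<alpha> max(Q[j] - Q[i] - Q, 0)  with  F[i] = P[i] + d_{0,i+1} - D[i+1],
  the minimisation over the predecessor i splits at the first index b_j with Q[b_j] \<ge> Q[j] - Q.
  Demands are nonnegative, so Q[\<cdot>] is monotone and b_j is nondecreasing in j.  For i \<ge> b_j the
  penalty vanishes and one needs the minimum of F over the sliding window [b_j, j), maintained by a
  monotone deque; for i < b_j the penalty is \<alpha> (Q[j] - Q) - \<alpha> Q[i], so one needs the minimum of
  F[i] - \<alpha> Q[i] over the growing prefix [0, b_j), maintained by a running minimum.  Every index enters
  and leaves the deque at most once and b_j only increases, so the potential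
  20 (n + 1 - j) + 4 (deque length) + 5 (n + 1 - b_j) pays for all loop iterations.  The optimal path
  is read off the predecessor pointers.\<close>

section \<open>Total correctness with step counts\<close>

definition runs_to :: "com \<Rightarrow> st \<Rightarrow> (nat \<Rightarrow> st \<Rightarrow> bool) \<Rightarrow> bool" where
  "runs_to c s R \<longleftrightarrow> (\<exists>t s'. exec c s t s' \<and> R t s')"

lemma runs_to_Skip: "R 1 s \<Longrightarrow> runs_to Skip s R"
  unfolding runs_to_def by (blast intro: exec.Skip)

lemma runs_to_NAssign:
  "R 1 (s\<lparr>nmem := (nmem s)((k, neval e s) := neval v s)\<rparr>) \<Longrightarrow> runs_to (NAssign k e v) s R"
  unfolding runs_to_def by (blast intro: exec.NAssign)

lemma runs_to_RAssign:
  "R 1 (s\<lparr>rmem := (rmem s)((k, neval e s) := reval v s)\<rparr>) \<Longrightarrow> runs_to (RAssign k e v) s R"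
  unfolding runs_to_def by (blast intro: exec.RAssign)

lemma runs_to_Seq:
  "runs_to c1 s (\<lambda>t1 s1. runs_to c2 s1 (\<lambda>t2 s2. R (t1 + t2) s2)) \<Longrightarrow> runs_to (Seq c1 c2) s R"
  unfolding runs_to_def by (blast intro: exec.Seq)

lemma runs_to_If:
  "(beval b s \<Longrightarrow> runs_to c1 s (\<lambda>t. R (t + 1))) \<Longrightarrow> (\<not> beval b s \<Longrightarrow> runs_to c2 s (\<lambda>t. R (t + 1)))
   \<Longrightarrow> runs_to (If b c1 c2) s R"
  unfolding runs_to_def by (cases "beval b s") (blast intro: exec.IfT exec.IfF)+

lemma runs_to_mono: "runs_to c s R \<Longrightarrow> (\<And>t s'. R t s' \<Longrightarrow> R' t s') \<Longrightarrow> runs_to c s R'"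
  unfolding runs_to_def by blast

lemma runs_to_SeqI:
  "runs_to c1 s R1 \<Longrightarrow> (\<And>t s'. R1 t s' \<Longrightarrow> runs_to c2 s' (\<lambda>t2 s2. R (t + t2) s2))
   \<Longrightarrow> runs_to (Seq c1 c2) s R"
  by (rule runs_to_Seq, erule runs_to_mono) auto

lemma runs_to_While:
  assumes "I s"
    and step: "\<And>s. I s \<Longrightarrow> beval b s \<Longrightarrow> runs_to c s (\<lambda>t s'. I s' \<and> t + pot s' < pot s)"
  shows "runs_to (While b c) s (\<lambda>t s'. I s' \<and> \<not> beval b s' \<and> t + pot s' \<le> pot s + 1)"
  using assms(1)
proof (induction "pot s" arbitrary: s rule: less_induct)
  case less
  show ?case
  proof (cases "beval b s")
    case False
    then show ?thesis
      unfolding runs_to_def using less.prems exec.WhileF[OF False] by fastforce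
  next
    case True
    from step[OF less.prems True] obtain t1 s1 where e1: "exec c s t1 s1" and i1: "I s1"
      and p1: "t1 + pot s1 < pot s"
      unfolding runs_to_def by blast
    from less.hyps[of s1] p1 i1 obtain t2 s2 where e2: "exec (While b c) s1 t2 s2"
      and r2: "I s2 \<and> \<not> beval b s2 \<and> t2 + pot s2 \<le> pot s1 + 1"
      unfolding runs_to_def by fastforce
    show ?thesis
      unfolding runs_to_def using exec.WhileT[OF True e1 e2] r2 p1
      by (intro exI[of _ "t1 + t2 + 1"] exI[of _ s2]) auto
  qed
qed

definition timed_triple :: "(st \<Rightarrow> bool) \<Rightarrow> com \<Rightarrow> (st \<Rightarrow> bool) \<Rightarrow> nat \<Rightarrow> bool" where
  "timed_triple P c R b \<longleftrightarrow> (\<forall>s. P s \<longrightarrow> runs_to c s (\<lambda>t s'. t \<le> b \<and> R s'))"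

lemma timed_tripleI:
  "(\<And>s. P s \<Longrightarrow> runs_to c s (\<lambda>t s'. t \<le> b \<and> R s')) \<Longrightarrow> timed_triple P c R b"
  unfolding timed_triple_def by blast

lemma timed_triple_Seq:
  "timed_triple P c1 R a \<Longrightarrow> timed_triple R c2 S b \<Longrightarrow> timed_triple P (Seq c1 c2) S (a + b)"
  unfolding timed_triple_def by (fastforce intro: runs_to_SeqI elim: runs_to_mono)

lemma timed_triple_weaken: "timed_triple P c R a \<Longrightarrow> a \<le> b \<Longrightarrow> timed_triple P c R b"
  unfolding timed_triple_def by (fastforce elim: runs_to_mono)

function pred_chain :: "(nat \<Rightarrow> nat) \<Rightarrow> nat \<Rightarrow> nat list" where
  "pred_chain pr k = (if k = 0 \<or> pr k \<ge> k then [k] else k # pred_chain pr (pr k))"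
  by auto
termination by (relation "measure snd") auto

declare pred_chain.simps[simp del]

lemma pred_chain_hd: "pred_chain pr k \<noteq> [] \<and> hd (pred_chain pr k) = k"
  using pred_chain.simps[of pr k] by auto

lemma pred_chain_step: "0 < k \<Longrightarrow> pr k < k \<Longrightarrow> pred_chain pr k = k # pred_chain pr (pr k)"
  by (subst pred_chain.simps) auto

lemma length_pred_chain_le: "length (pred_chain pr k) \<le> k + 1"
proof (induction k rule: less_induct)
  case (less k)
  show ?case
  proof (cases "k = 0 \<or> pr k \<ge> k")
    case True then show ?thesis by (subst pred_chain.simps) auto
  next
    case False
    then show ?thesis using less[of "pr k"] by (subst pred_chain.simps) auto
  qed
qed

lemma pred_chain_long:
  "length (pred_chain pr k) \<ge> 2 \<Longrightarrow> 0 < k \<and> pr k < k \<and> pred_chain pr k = k # pred_chain pr (pr k)"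
  using pred_chain.simps[of pr k] by (auto split: if_splits)

section \<open>Monotone deques and running minima\<close>

definition mono_deque :: "(nat \<Rightarrow> nat) \<Rightarrow> (nat \<Rightarrow> real) \<Rightarrow> nat \<Rightarrow> nat \<Rightarrow> nat \<Rightarrow> bool" where
  "mono_deque dq F h T w \<longleftrightarrow> (\<forall>k. h \<le> k \<and> k < T \<longrightarrow> dq k < w) \<and>
     (\<forall>k k'. h \<le> k \<and> k < k' \<and> k' < T \<longrightarrow> dq k < dq k' \<and> F (dq k) < F (dq k'))"

definition deque_above :: "(nat \<Rightarrow> nat) \<Rightarrow> nat \<Rightarrow> nat \<Rightarrow> nat \<Rightarrow> bool" where
  "deque_above dq h T lo \<longleftrightarrow> (\<forall>k. h \<le> k \<and> k < T \<longrightarrow> lo \<le> dq k)"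

definition deque_dominates :: "(nat \<Rightarrow> nat) \<Rightarrow> (nat \<Rightarrow> real) \<Rightarrow> nat \<Rightarrow> nat \<Rightarrow> nat \<Rightarrow> nat \<Rightarrow> bool" where
  "deque_dominates dq F h T lo w \<longleftrightarrow> (\<forall>i. lo \<le> i \<and> i < w \<longrightarrow>
     (\<exists>k. h \<le> k \<and> k < T \<and> i \<le> dq k \<and> F (dq k) \<le> F i))"

definition deque_dominates_or ::
    "(nat \<Rightarrow> nat) \<Rightarrow> (nat \<Rightarrow> real) \<Rightarrow> nat \<Rightarrow> nat \<Rightarrow> nat \<Rightarrow> nat \<Rightarrow> nat \<Rightarrow> bool" where
  "deque_dominates_or dq F h T lo w x \<longleftrightarrow> (\<forall>i. lo \<le> i \<and> i < w \<longrightarrow>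
     (\<exists>k. h \<le> k \<and> k < T \<and> i \<le> dq k \<and> F (dq k) \<le> F i) \<or> F x \<le> F i)"

lemma deque_dominates_orI: "deque_dominates dq F h T lo w \<Longrightarrow> deque_dominates_or dq F h T lo w x"
  unfolding deque_dominates_def deque_dominates_or_def by blast

lemma mono_deque_shrink: "mono_deque dq F h T w \<Longrightarrow> T' \<le> T \<Longrightarrow> mono_deque dq F h T' w"
  unfolding mono_deque_def by auto

lemma deque_above_shrink: "deque_above dq h T lo \<Longrightarrow> T' \<le> T \<Longrightarrow> deque_above dq h T' lo"
  unfolding deque_above_def by auto

lemma deque_dominates_mono:
  "deque_dominates dq F h T lo w \<Longrightarrow> lo \<le> lo' \<Longrightarrow> deque_dominates dq F h T lo' w"
  unfolding deque_dominates_def by auto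

lemma mono_deque_cong:
  "mono_deque dq F h T w \<Longrightarrow> \<forall>i<w. F' i = F i \<Longrightarrow> mono_deque dq F' h T w"
  unfolding mono_deque_def by auto

lemma deque_dominates_cong:
  "mono_deque dq F h T w \<Longrightarrow> deque_dominates dq F h T lo w \<Longrightarrow> \<forall>i<w. F' i = F i
   \<Longrightarrow> deque_dominates dq F' h T lo w"
  unfolding mono_deque_def deque_dominates_def by (metis order.strict_trans1)

lemma deque_dominates_or_pop_back:
  assumes "h < T" "F x \<le> F (dq (T - 1))" "deque_dominates_or dq F h T lo w x"
  shows "deque_dominates_or dq F h (T - 1) lo w x"
  unfolding deque_dominates_or_def
proof (intro allI impI)
  fix i assume i: "lo \<le> i \<and> i < w"
  from assms(3) i consider (deque) k where "h \<le> k" "k < T" "i \<le> dq k" "F (dq k) \<le> F i"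
    | (new) "F x \<le> F i"
    unfolding deque_dominates_or_def by blast
  then show "(\<exists>k. h \<le> k \<and> k < T - 1 \<and> i \<le> dq k \<and> F (dq k) \<le> F i) \<or> F x \<le> F i"
  proof cases
    case (deque k)
    then show ?thesis using assms(2) by (cases "k = T - 1") auto
  qed simp
qed

lemma deque_push:
  assumes "mono_deque dq F h T x" "h \<le> T" "h < T \<longrightarrow> F (dq (T - 1)) < F x"
    "deque_dominates_or dq F h T lo x x" "deque_above dq h T lo" "lo \<le> x"
  shows "mono_deque (dq(T := x)) F h (Suc T) (Suc x)"
    and "deque_dominates (dq(T := x)) F h (Suc T) lo (Suc x)"
    and "deque_above (dq(T := x)) h (Suc T) lo"
proof -
  show "mono_deque (dq(T := x)) F h (Suc T) (Suc x)"
    unfolding mono_deque_def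
  proof (rule conjI; intro allI impI)
    fix k assume "h \<le> k \<and> k < Suc T"
    then show "(dq(T := x)) k < Suc x" using assms(1) unfolding mono_deque_def by (cases "k = T") auto
  next
    fix k k' assume kk: "h \<le> k \<and> k < k' \<and> k' < Suc T"
    show "(dq(T := x)) k < (dq(T := x)) k' \<and> F ((dq(T := x)) k) < F ((dq(T := x)) k')"
    proof (cases "k' = T")
      case True
      have "F (dq k) \<le> F (dq (T - 1))"
        using assms(1) kk True unfolding mono_deque_def by (cases "k = T - 1") (auto intro: less_imp_le)
      then show ?thesis using True assms kk unfolding mono_deque_def by auto
    next
      case False
      then show ?thesis using assms(1) kk unfolding mono_deque_def by auto
    qed
  qed
  show "deque_dominates (dq(T := x)) F h (Suc T) lo (Suc x)"
    unfolding deque_dominates_def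
  proof (intro allI impI)
    fix i assume i: "lo \<le> i \<and> i < Suc x"
    show "\<exists>k\<ge>h. k < Suc T \<and> i \<le> (dq(T := x)) k \<and> F ((dq(T := x)) k) \<le> F i"
    proof (cases "i = x")
      case True then show ?thesis using assms(2) by (intro exI[of _ T]) auto
    next
      case False
      with assms(4) i consider (deque) k where "h \<le> k" "k < T" "i \<le> dq k" "F (dq k) \<le> F i"
        | (new) "F x \<le> F i"
        unfolding deque_dominates_or_def by fastforce
      then show ?thesis
      proof cases
        case (deque k) then show ?thesis by (intro exI[of _ k]) auto
      next
        case new then show ?thesis using False i assms(2) by (intro exI[of _ T]) auto
      qed
    qed
  qed
  show "deque_above (dq(T := x)) h (Suc T) lo" using assms(5,6) unfolding deque_above_def by auto
qed

lemma deque_pop_front: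
  assumes "mono_deque dq F h T w" "dq h < lo" "deque_dominates dq F h T lo w"
  shows "deque_dominates dq F (Suc h) T lo w" and "mono_deque dq F (Suc h) T w"
proof -
  show "deque_dominates dq F (Suc h) T lo w"
    unfolding deque_dominates_def
  proof (intro allI impI)
    fix i assume i: "lo \<le> i \<and> i < w"
    then obtain k where k: "h \<le> k" "k < T" "i \<le> dq k" "F (dq k) \<le> F i"
      using assms(3) unfolding deque_dominates_def by blast
    then have "k \<noteq> h" using assms(2) i by auto
    then show "\<exists>k\<ge>Suc h. k < T \<and> i \<le> dq k \<and> F (dq k) \<le> F i" using k by (intro exI[of _ k]) auto
  qed
  show "mono_deque dq F (Suc h) T w" using assms(1) unfolding mono_deque_def by auto
qed

lemma deque_above_front:
  assumes "mono_deque dq F h T w" "h < T \<longrightarrow> lo \<le> dq h"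
  shows "deque_above dq h T lo"
  unfolding deque_above_def
proof (intro allI impI)
  fix k assume k: "h \<le> k \<and> k < T"
  then have "dq h \<le> dq k"
    using assms(1) unfolding mono_deque_def by (cases "k = h") (auto intro: less_imp_le)
  then show "lo \<le> dq k" using assms(2) k by auto
qed

lemma deque_front_min:
  assumes "mono_deque dq F h T w" "deque_dominates dq F h T lo w" "lo \<le> i" "i < w"
  shows "F (dq h) \<le> F i"
proof -
  obtain k where k: "h \<le> k" "k < T" "i \<le> dq k" "F (dq k) \<le> F i"
    using assms unfolding deque_dominates_def by blast
  have "F (dq h) \<le> F (dq k)"
    using assms(1) k unfolding mono_deque_def by (cases "k = h") (auto intro: less_imp_le)
  then show ?thesis using k by simp
qed

lemma deque_empty_window: "deque_dominates dq F h T lo w \<Longrightarrow> T \<le> h \<Longrightarrow> w \<le> lo"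
  unfolding deque_dominates_def by (meson le_refl order.strict_trans1 not_less)

text \<open>bi and bh are unconstrained when b = 0.\<close>

definition prefix_argmin :: "(nat \<Rightarrow> real) \<Rightarrow> nat \<Rightarrow> nat \<Rightarrow> real \<Rightarrow> bool" where
  "prefix_argmin H b bi bh \<longleftrightarrow> (0 < b \<longrightarrow> bi < b \<and> bh = H bi \<and> (\<forall>i<b. bh \<le> H i))"

lemma prefix_argmin_new:
  "prefix_argmin H b bi bh \<Longrightarrow> b = 0 \<or> H b < bh \<Longrightarrow> prefix_argmin H (Suc b) b (H b)"
  unfolding prefix_argmin_def by (auto simp: less_Suc_eq intro: less_imp_le order.trans)

lemma prefix_argmin_keep:
  "prefix_argmin H b bi bh \<Longrightarrow> \<not> (b = 0 \<or> H b < bh) \<Longrightarrow> prefix_argmin H (Suc b) bi bh"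
  unfolding prefix_argmin_def by (auto simp: less_Suc_eq)

lemma prefix_argmin_cong: "prefix_argmin H b bi bh \<Longrightarrow> \<forall>i<b. H' i = H i \<Longrightarrow> prefix_argmin H' b bi bh"
  unfolding prefix_argmin_def by auto

section \<open>Shortest paths in the complete DAG\<close>

definition bellman_table :: "(nat \<Rightarrow> nat \<Rightarrow> real) \<Rightarrow> (nat \<Rightarrow> real) \<Rightarrow> (nat \<Rightarrow> nat) \<Rightarrow> nat \<Rightarrow> bool" where
  "bellman_table c P pr j \<longleftrightarrow> P 0 = 0 \<and>
     (\<forall>i. 0 < i \<and> i < j \<longrightarrow> pr i < i \<and> P i = P (pr i) + c (pr i) i) \<and>
     (\<forall>i<j. \<forall>k<i. P i \<le> P k + c k i)"

lemma bellman_table_extend: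
  "bellman_table c P pr j \<Longrightarrow> 0 < j \<Longrightarrow> p < j \<Longrightarrow> v = P p + c p j \<Longrightarrow> \<forall>k<j. v \<le> P k + c k j
   \<Longrightarrow> bellman_table c (P(j := v)) (pr(j := p)) (Suc j)"
  unfolding bellman_table_def by (auto simp: less_Suc_eq)

lemma path_cost_snoc: "xs \<noteq> [] \<Longrightarrow> path_cost c (xs @ [x]) = path_cost c xs + c (last xs) x"
  by (induction xs rule: induct_list012) (auto simp: path_cost_def)

lemma bellman_table_le_path_cost:
  assumes "bellman_table c P pr j" "p \<noteq> []" "hd p = 0" "sorted_wrt (<) p" "last p < j"
  shows "P (last p) \<le> path_cost c p"
  using assms(2-)
proof (induction p rule: rev_induct)
  case (snoc x xs)
  show ?case
  proof (cases "xs = []")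
    case True
    then show ?thesis using snoc.prems assms(1) by (simp add: bellman_table_def path_cost_def)
  next
    case False
    have xs: "sorted_wrt (<) xs" "last xs < x" using snoc.prems False by (auto simp: sorted_wrt_append)
    then have "P (last xs) \<le> path_cost c xs"
      using snoc.IH False snoc.prems by (simp add: hd_append)
    moreover have "P x \<le> P (last xs) + c (last xs) x"
      using assms(1) xs snoc.prems unfolding bellman_table_def by auto
    ultimately show ?thesis using False by (simp add: path_cost_snoc)
  qed
qed simp

lemma pred_chain_le: "set (pred_chain pr k) \<subseteq> {..k}"
proof (induction k rule: less_induct)
  case (less k)
  show ?case
  proof (cases "k = 0 \<or> pr k \<ge> k")
    case True
    then show ?thesis by (subst pred_chain.simps) auto
  next
    case False
    then have "set (pred_chain pr (pr k)) \<subseteq> {..pr k}" using less by simp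
    then show ?thesis using False by (subst pred_chain.simps) auto
  qed
qed

lemma pred_chain_shortest_path:
  assumes "bellman_table c P pr j" "k < j"
  shows "is_path k (rev (pred_chain pr k)) \<and> path_cost c (rev (pred_chain pr k)) = P k"
  using assms(2)
proof (induction k rule: less_induct)
  case (less k)
  show ?case
  proof (cases "k = 0")
    case True
    then show ?thesis
      using assms(1) by (simp add: pred_chain.simps bellman_table_def path_cost_def is_path_def)
  next
    case False
    then have lt: "pr k < k" and Pk: "P k = P (pr k) + c (pr k) k"
      using assms(1) less.prems unfolding bellman_table_def by auto
    have "\<forall>i \<in> set (pred_chain pr (pr k)). i < k"
      using pred_chain_le[of pr "pr k"] lt by auto
    then show ?thesis
      using less.IH[of "pr k"] lt less.prems Pk pred_chain_step[of k pr] False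
      by (auto simp: is_path_def path_cost_snoc sorted_wrt_append hd_append)
  qed
qed

section \<open>The program\<close>

text \<open>Natural cells: N[7,0..6] are the registers j (current
  vertex), h and T (front and end of the deque), b (the break point b_j), bi (the argmin of the
  prefix minimum), k and pos (used during path reconstruction); N[6,\<cdot>] is the deque and N[5,i] the
  predecessor of i.  Real cells: R[6,i] = D[i], R[7,i] = Q[i], R[8,i] = P[i], R[9,i] = F[i],
  R[10,i] = F[i] - \<alpha> Q[i], and R[11,0] is the prefix minimum of R[10,\<cdot>] below b.\<close>

abbreviation "jv \<equiv> NL 7 (NC 0)"
abbreviation "hv \<equiv> NL 7 (NC 1)"
abbreviation "tv \<equiv> NL 7 (NC 2)"
abbreviation "bv \<equiv> NL 7 (NC 3)"
abbreviation "biv \<equiv> NL 7 (NC 4)"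
abbreviation "kv \<equiv> NL 7 (NC 5)"
abbreviation "posv \<equiv> NL 7 (NC 6)"
abbreviation "nv \<equiv> NL 0 (NC 0)"
abbreviation "mv \<equiv> NL 2 (NC 0)"
abbreviation "jm1 \<equiv> NSub jv (NC 1)"

definition "prefix_sums_loop = While (NLess jv (NAdd nv (NC 1)))
   (Seq (RAssign 7 jv (RAdd (RL 7 (NSub jv (NC 1))) (RL 1 jv)))
   (Seq (RAssign 6 (NAdd jv (NC 1)) (RAdd (RL 6 jv) (RL 4 jv)))
        (NAssign 7 (NC 0) (NAdd jv (NC 1)))))"

definition "prefix_sums = Seq (RAssign 6 (NC 0) (RC 0)) (Seq (RAssign 6 (NC 1) (RC 0))
   (Seq (RAssign 7 (NC 0) (RC 0)) (Seq (NAssign 7 (NC 0) (NC 1)) prefix_sums_loop)))"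

definition "dp_init = Seq (RAssign 8 (NC 0) (RC 0)) (Seq (NAssign 7 (NC 1) (NC 0))
   (Seq (NAssign 7 (NC 2) (NC 0)) (Seq (NAssign 7 (NC 3) (NC 0)) (NAssign 7 (NC 0) (NC 1)))))"

definition "compute_F_H = Seq (RAssign 9 jm1 (RSub (RAdd (RL 8 jm1) (RL 2 jv)) (RL 6 jv)))
   (RAssign 10 jm1 (RSub (RL 9 jm1) (RMul (RL 0 (NC 1)) (RL 7 jm1))))"

definition "pop_dominated =
  While (BAnd (NLess hv tv) (RLe (RL 9 jm1) (RL 9 (NL 6 (NSub tv (NC 1))))))
   (NAssign 7 (NC 2) (NSub tv (NC 1)))"

definition "push_back = Seq (NAssign 6 tv jm1) (NAssign 7 (NC 2) (NAdd tv (NC 1)))"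

definition "advance_break = While (RLess (RL 7 bv) (RSub (RL 7 jv) (RL 0 (NC 0))))
  (Seq (If (BOr (NEq bv (NC 0)) (RLess (RL 10 bv) (RL 11 (NC 0))))
           (Seq (RAssign 11 (NC 0) (RL 10 bv)) (NAssign 7 (NC 4) bv)) Skip)
       (NAssign 7 (NC 3) (NAdd bv (NC 1))))"

definition "pop_front_outside =
  While (BAnd (NLess hv tv) (NLess (NL 6 hv) bv)) (NAssign 7 (NC 1) (NAdd hv (NC 1)))"

abbreviation "prefix_value \<equiv> RAdd (RL 11 (NC 0)) (RMul (RL 0 (NC 1)) (RSub (RL 7 jv) (RL 0 (NC 0))))"
abbreviation "base_value \<equiv> RAdd (RL 6 jv) (RL 3 jv)"

definition "use_prefix_min = Seq (RAssign 8 jv (RAdd base_value prefix_value)) (NAssign 5 jv biv)"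
definition "use_window_min =
  Seq (RAssign 8 jv (RAdd base_value (RL 9 (NL 6 hv)))) (NAssign 5 jv (NL 6 hv))"
definition "choose_pred = If (NLess hv tv)
  (If (BAnd (NLess (NC 0) bv) (RLess prefix_value (RL 9 (NL 6 hv)))) use_prefix_min use_window_min)
  use_prefix_min"

definition "next_vertex = NAssign 7 (NC 0) (NAdd jv (NC 1))"

definition "dp_step = Seq compute_F_H (Seq (Seq pop_dominated push_back)
  (Seq (Seq advance_break pop_front_outside) (Seq choose_pred next_vertex)))"
definition "dp_loop = While (NLess jv (NAdd nv (NC 1))) dp_step"
definition "store_cost = RAssign 5 (NC 0) (RL 8 nv)"

definition "start_measure = Seq (NAssign 7 (NC 5) nv) (NAssign 2 (NC 0) (NC 0))"
definition "measure_path =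
  While (NLess (NC 0) kv) (Seq (NAssign 7 (NC 5) (NL 5 kv)) (NAssign 2 (NC 0) (NAdd mv (NC 1))))"
definition "start_write = Seq (NAssign 7 (NC 5) nv) (Seq (NAssign 7 (NC 6) mv) (NAssign 3 posv kv))"
definition "write_path = While (NLess (NC 0) posv)
  (Seq (NAssign 7 (NC 5) (NL 5 kv)) (Seq (NAssign 7 (NC 6) (NSub posv (NC 1))) (NAssign 3 posv kv)))"
definition "reconstruct = Seq (Seq start_measure measure_path) (Seq start_write write_path)"

definition "split_program =
  Seq prefix_sums (Seq dp_init (Seq dp_loop (Seq store_cost reconstruct)))"

definition array :: "(nat \<times> nat \<Rightarrow> 'a) \<Rightarrow> nat \<Rightarrow> nat \<Rightarrow> 'a" where
  "array M a i = M (a, i)"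

lemma array_apply: "array M a i = M (a, i)"
  by (simp add: array_def)

lemma array_upd[simp]:
  "array (M((a', i) := v)) a = (if a' = a then (array M a)(i := v) else array M a)"
  by (auto simp: fun_eq_iff array_apply)

abbreviation "jreg s \<equiv> nmem s (7, 0)"
abbreviation "head s \<equiv> nmem s (7, 1)"
abbreviation "tail s \<equiv> nmem s (7, 2)"
abbreviation "brk s \<equiv> nmem s (7, 3)"
abbreviation "brk_arg s \<equiv> nmem s (7, 4)"
abbreviation "brk_min s \<equiv> rmem s (11, 0)"
abbreviation "deque s \<equiv> array (nmem s) 6"
abbreviation "pred s \<equiv> array (nmem s) 5"
abbreviation "Ptab s \<equiv> array (rmem s) 8"
abbreviation "Ftab s \<equiv> array (rmem s) 9"
abbreviation "Htab s \<equiv> array (rmem s) 10"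

lemma pop_dominated_spec:
  assumes "jreg s = Suc x" "head s \<le> tail s"
    "mono_deque (deque s) (Ftab s) (head s) (tail s) w"
    "deque_dominates_or (deque s) (Ftab s) (head s) (tail s) lo w x"
  shows "runs_to pop_dominated s (\<lambda>t s'. \<exists>T'. s' = s\<lparr>nmem := (nmem s)((7,2) := T')\<rparr> \<and>
     head s \<le> T' \<and> T' \<le> tail s \<and> mono_deque (deque s) (Ftab s) (head s) T' w \<and>
     deque_dominates_or (deque s) (Ftab s) (head s) T' lo w x \<and>
     (head s < T' \<longrightarrow> Ftab s (deque s (T' - 1)) < Ftab s x) \<and> t + 2 * T' \<le> 2 * tail s + 1)"
  unfolding pop_dominated_def
  apply (rule runs_to_mono[OF runs_to_While[where
        I="\<lambda>s'. \<exists>T'. s' = s\<lparr>nmem := (nmem s)((7,2) := T')\<rparr> \<and> head s \<le> T' \<and> T' \<le> tail s \<and>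
          mono_deque (deque s) (Ftab s) (head s) T' w \<and> deque_dominates_or (deque s) (Ftab s) (head s) T' lo w x"
        and pot="\<lambda>s'. 2 * tail s'"]])
  subgoal using assms by (intro exI[of _ "tail s"]) auto
  subgoal for s'
    apply (elim exE conjE)
    apply (rule runs_to_NAssign)
    subgoal for T'
      using assms deque_dominates_or_pop_back[of "head s" T' "Ftab s" x "deque s" lo w]
      by (auto intro!: exI[of _ "T' - 1"] intro: mono_deque_shrink simp: array_apply)
    done
  using assms by (auto simp: array_apply)

lemma pop_front_outside_spec:
  assumes "head s \<le> tail s"
    "mono_deque (deque s) (Ftab s) (head s) (tail s) w"
    "deque_dominates (deque s) (Ftab s) (head s) (tail s) (brk s) w"
  shows "runs_to pop_front_outside s (\<lambda>t s'. \<exists>H'. s' = s\<lparr>nmem := (nmem s)((7,1) := H')\<rparr> \<and>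
     head s \<le> H' \<and> H' \<le> tail s \<and> mono_deque (deque s) (Ftab s) H' (tail s) w \<and>
     deque_dominates (deque s) (Ftab s) H' (tail s) (brk s) w \<and>
     deque_above (deque s) H' (tail s) (brk s) \<and> t + 2 * (tail s - H') \<le> 2 * (tail s - head s) + 1)"
  unfolding pop_front_outside_def
  apply (rule runs_to_mono[OF runs_to_While[where
        I="\<lambda>s'. \<exists>H'. s' = s\<lparr>nmem := (nmem s)((7,1) := H')\<rparr> \<and> head s \<le> H' \<and> H' \<le> tail s \<and>
          mono_deque (deque s) (Ftab s) H' (tail s) w \<and> deque_dominates (deque s) (Ftab s) H' (tail s) (brk s) w"
        and pot="\<lambda>s'. 2 * (tail s - head s')"]])
  subgoal using assms by (intro exI[of _ "head s"]) auto
  subgoal for s'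
    apply (elim exE conjE)
    apply (rule runs_to_NAssign)
    subgoal for H'
      using deque_pop_front[of "deque s" "Ftab s" H' "tail s" w "brk s"]
      by (auto intro!: exI[of _ "Suc H'"] simp: array_apply)
    done
  subgoal for t s'
    apply (elim exE conjE)
    subgoal for H'
      using deque_above_front[of "deque s" "Ftab s" H' "tail s" w "brk s"]
      by (intro exI[of _ H']) (auto simp: array_apply)
    done
  done

locale split_instance =
  fixes n :: nat and Q \<alpha> :: real and q d0 dback dnext :: "nat \<Rightarrow> real"
  assumes n_pos: "n \<ge> 1" and capacity_nonneg: "Q \<ge> 0" and demands_nonneg: "\<forall>i\<in>{1..n}. q i \<ge> 0"
begin

abbreviation "c \<equiv> arc_cost Q \<alpha> q d0 dback dnext"
abbreviation "Dp \<equiv> Dpre dnext"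
abbreviation "Qp \<equiv> Qpre q"

lemma Qp_Suc: "Qp (Suc i) = Qp i + q (Suc i)"
  unfolding Qpre_def by simp

lemma Dp_Suc: "i \<ge> 1 \<Longrightarrow> Dp (Suc i) = Dp i + dnext i"
  unfolding Dpre_def by simp

lemma Dp_Qp_0: "Dp 0 = 0" "Dp (Suc 0) = 0" "Qp 0 = 0"
  unfolding Dpre_def Qpre_def by auto

lemma Qp_mono: "i \<le> k \<Longrightarrow> k \<le> n \<Longrightarrow> Qp i \<le> Qp k"
proof (induction k)
  case (Suc k)
  then show ?case
    using demands_nonneg by (cases "i = Suc k") (auto simp: Qp_Suc intro: add_increasing2)
qed simp

definition input_ok :: "(nat \<times> nat \<Rightarrow> nat) \<Rightarrow> (nat \<times> nat \<Rightarrow> real) \<Rightarrow> bool" where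
  "input_ok N R \<longleftrightarrow> N (0,0) = n \<and> R (0,0) = Q \<and> R (0,1) = \<alpha> \<and>
     (\<forall>i. 1 \<le> i \<and> i \<le> n \<longrightarrow> R (1,i) = q i \<and> R (2,i) = d0 i \<and> R (3,i) = dback i) \<and>
     (\<forall>i. 1 \<le> i \<and> i < n \<longrightarrow> R (4,i) = dnext i)"

abbreviation "input_intact s \<equiv> input_ok (nmem s) (rmem s)"

lemma input_intact_init: "input_intact (init_state n Q \<alpha> q d0 dback dnext)"
  unfolding input_ok_def init_state_def by auto

lemma input_ok_rupd[simp]: "a \<ge> 5 \<Longrightarrow> input_ok N (R((a,i) := v)) = input_ok N R"
  unfolding input_ok_def by auto

lemma input_ok_nupd[simp]: "a \<ge> 1 \<Longrightarrow> input_ok (N((a,i) := v)) R = input_ok N R"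
  unfolding input_ok_def by auto

lemma input_intact_simps[simp]:
  "input_intact s \<Longrightarrow> nmem s (0,0) = n"
  "input_intact s \<Longrightarrow> rmem s (0,0) = Q"
  "input_intact s \<Longrightarrow> rmem s (0, Suc 0) = \<alpha>"
  unfolding input_ok_def by auto

lemma input_intactD:
  assumes "input_intact s" "1 \<le> i"
  shows "i \<le> n \<Longrightarrow> rmem s (Suc 0, i) = q i"
    and "i \<le> n \<Longrightarrow> rmem s (2, i) = d0 i"
    and "i \<le> n \<Longrightarrow> rmem s (3, i) = dback i"
    and "i < n \<Longrightarrow> rmem s (4, i) = dnext i"
  using assms unfolding input_ok_def by auto

definition sums_stored :: "st \<Rightarrow> bool" where
  "sums_stored s \<longleftrightarrow> (\<forall>i\<le>n. rmem s (7,i) = Qp i) \<and> (\<forall>i\<le>n. rmem s (6,i) = Dp i)"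

definition prefix_sums_inv :: "st \<Rightarrow> bool" where
  "prefix_sums_inv s \<longleftrightarrow> input_intact s \<and> 1 \<le> jreg s \<and> jreg s \<le> n + 1 \<and>
     (\<forall>i < jreg s. rmem s (7,i) = Qp i) \<and> (\<forall>i. i \<le> jreg s \<and> i \<le> n \<longrightarrow> rmem s (6,i) = Dp i)"

lemma prefix_sums_loop_spec:
  assumes "prefix_sums_inv s"
  shows "runs_to prefix_sums_loop s (\<lambda>t s'. prefix_sums_inv s' \<and> jreg s' = n + 1 \<and>
     t + 4 * (n + 1 - jreg s') \<le> 4 * (n + 1 - jreg s) + 1)"
  unfolding prefix_sums_loop_def
  apply (rule runs_to_mono[OF runs_to_While[where I=prefix_sums_inv
          and pot="\<lambda>s. 4 * (n + 1 - jreg s)"]])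
    apply (rule assms)
  subgoal for s
    apply (rule runs_to_Seq runs_to_RAssign runs_to_NAssign)+
    apply (simp add: prefix_sums_inv_def)
    apply (elim conjE)
    apply (intro conjI)
    using Qp_Suc[of "jreg s - 1"] Dp_Suc[of "jreg s"] input_intactD(1,4)[of s "jreg s"]
    by (auto simp: less_Suc_eq)
  apply (auto simp: prefix_sums_inv_def)
  done

lemma prefix_sums_spec:
  "timed_triple input_intact prefix_sums (\<lambda>s. input_intact s \<and> sums_stored s) (4 * n + 5)"
  unfolding prefix_sums_def
  apply (rule timed_tripleI)
  apply (rule runs_to_Seq runs_to_RAssign runs_to_NAssign)+
  apply (rule runs_to_mono[OF prefix_sums_loop_spec])
  subgoal using n_pos by (auto simp: prefix_sums_inv_def Dp_Qp_0 le_Suc_eq)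
  subgoal by (auto simp: prefix_sums_inv_def sums_stored_def)
  done

declare array_apply[simp]

definition FH_stored :: "st \<Rightarrow> nat \<Rightarrow> bool" where
  "FH_stored s w \<longleftrightarrow> (\<forall>i<w. rmem s (9,i) = rmem s (8,i) + d0 (i+1) - Dp (i+1) \<and>
     rmem s (10,i) = rmem s (9,i) - \<alpha> * Qp i)"

text \<open>The state of the dynamic program once all i < w are candidate predecessors.\<close>

definition window_inv :: "nat \<Rightarrow> st \<Rightarrow> bool" where
  "window_inv w s \<longleftrightarrow> input_intact s \<and> sums_stored s \<and> FH_stored s w \<and> head s \<le> tail s \<and>
     mono_deque (deque s) (Ftab s) (head s) (tail s) w \<and>
     deque_above (deque s) (head s) (tail s) (brk s) \<and>
     deque_dominates (deque s) (Ftab s) (head s) (tail s) (brk s) w \<and>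
     brk s \<le> w \<and> (\<forall>i < brk s. Qp i < Qp w - Q) \<and>
     prefix_argmin (Htab s) (brk s) (brk_arg s) (brk_min s)"

definition dp_inv :: "st \<Rightarrow> bool" where
  "dp_inv s \<longleftrightarrow> 1 \<le> jreg s \<and> jreg s \<le> n + 1 \<and> bellman_table c (Ptab s) (pred s) (jreg s) \<and>
     window_inv (jreg s - 1) s"

definition window_potential :: "st \<Rightarrow> nat" where
  "window_potential s = 4 * (tail s - head s) + 5 * (n + 1 - brk s)"

definition dp_potential :: "st \<Rightarrow> nat" where
  "dp_potential s = 20 * (n + 1 - jreg s) + window_potential s"

definition dp_ready :: "nat \<Rightarrow> st \<Rightarrow> bool" where
  "dp_ready j s \<longleftrightarrow> 1 \<le> j \<and> j \<le> n \<and> jreg s = j \<and> bellman_table c (Ptab s) (pred s) j"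

definition F_H_computed :: "nat \<Rightarrow> st \<Rightarrow> bool" where
  "F_H_computed j s \<longleftrightarrow> dp_ready j s \<and> window_inv (j - 1) s \<and> FH_stored s j"

definition window_pushed :: "nat \<Rightarrow> st \<Rightarrow> bool" where
  "window_pushed j s \<longleftrightarrow> dp_ready j s \<and> window_inv j s"

definition window_advanced :: "nat \<Rightarrow> st \<Rightarrow> bool" where
  "window_advanced j s \<longleftrightarrow> dp_ready j s \<and> window_inv j s \<and> Qp j - Q \<le> Qp (brk s)"

lemma runs_to_Seq_amortized:
  assumes "runs_to c1 s (\<lambda>t s'. P s' \<and> t + f s' \<le> f s + a)"
    and "\<And>s'. P s' \<Longrightarrow> runs_to c2 s' (\<lambda>t s''. R s'' \<and> t + f s'' \<le> f s' + b)"
  shows "runs_to (Seq c1 c2) s (\<lambda>t s''. R s'' \<and> t + f s'' \<le> f s + (a + b))"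
  using assms by (fastforce intro: runs_to_SeqI elim: runs_to_mono)

lemma window_inv_update_FH:
  assumes inv: "window_inv x s"
  shows "window_inv x (s\<lparr>rmem := (rmem s)((9,x) := a, (10,x) := b)\<rparr>)"
proof -
  have deque: "mono_deque (deque s) (Ftab s) (head s) (tail s) x"
      "deque_dominates (deque s) (Ftab s) (head s) (tail s) (brk s) x"
    and pa: "prefix_argmin (Htab s) (brk s) (brk_arg s) (brk_min s)" and bx: "brk s \<le> x"
    using inv unfolding window_inv_def by simp_all
  have agree: "\<forall>i<x. ((Ftab s)(x := a)) i = Ftab s i" "\<forall>i<brk s. ((Htab s)(x := b)) i = Htab s i"
    using bx by auto
  have "mono_deque (deque s) ((Ftab s)(x := a)) (head s) (tail s) x"
    "deque_dominates (deque s) ((Ftab s)(x := a)) (head s) (tail s) (brk s) x"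
    "prefix_argmin ((Htab s)(x := b)) (brk s) (brk_arg s) (brk_min s)"
    by (rule mono_deque_cong[OF deque(1) agree(1)] deque_dominates_cong[OF deque agree(1)]
        prefix_argmin_cong[OF pa agree(2)])+
  then show ?thesis
    using inv unfolding window_inv_def FH_stored_def sums_stored_def by simp
qed

lemma compute_F_H_spec:
  assumes ready: "dp_ready (Suc x) s" and inv: "window_inv x s"
  shows "runs_to compute_F_H s (\<lambda>t s'. F_H_computed (Suc x) s' \<and>
     t + window_potential s' \<le> window_potential s + 2)"
proof -
  define F where "F = rmem s (8,x) + d0 (Suc x) - Dp (Suc x)"
  define s' where "s' = s\<lparr>rmem := (rmem s)((9,x) := F, (10,x) := F - \<alpha> * Qp x)\<rparr>"
  have "window_inv x s'" unfolding s'_def by (rule window_inv_update_FH[OF inv])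
  moreover have "FH_stored s' (Suc x)"
    using inv unfolding s'_def F_def window_inv_def FH_stored_def by (auto simp: less_Suc_eq)
  moreover have "dp_ready (Suc x) s'" using ready unfolding s'_def dp_ready_def by simp
  moreover have inputs: "rmem s (0, Suc 0) = \<alpha>" "rmem s (7, x) = Qp x"
    "rmem s (6, Suc x) = Dp (Suc x)" "rmem s (2, Suc x) = d0 (Suc x)"
    using ready inv unfolding dp_ready_def window_inv_def sums_stored_def by (auto simp: input_intactD(2))
  have "runs_to compute_F_H s (\<lambda>t s''. t = 2 \<and> s'' = s')"
    unfolding compute_F_H_def
    apply (rule runs_to_Seq runs_to_RAssign)+
    using inputs ready by (simp add: s'_def F_def dp_ready_def)
  ultimately show ?thesis
    by (auto elim: runs_to_mono simp: s'_def F_H_computed_def window_potential_def)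
qed

lemma push_window_spec:
  assumes stage: "F_H_computed (Suc x) s"
  shows "runs_to (Seq pop_dominated push_back) s (\<lambda>t s'. window_pushed (Suc x) s' \<and>
     t + window_potential s' \<le> window_potential s + 7)"
proof -
  have ready: "dp_ready (Suc x) s" and inv: "window_inv x s" and FH: "FH_stored s (Suc x)"
    and j: "jreg s = Suc x" "Suc x \<le> n"
    using stage unfolding F_H_computed_def dp_ready_def by auto
  show ?thesis
  proof (rule runs_to_SeqI[OF pop_dominated_spec[OF j(1)]])
    show "head s \<le> tail s" "mono_deque (deque s) (Ftab s) (head s) (tail s) x"
      "deque_dominates_or (deque s) (Ftab s) (head s) (tail s) (brk s) x x"
      using inv unfolding window_inv_def by (auto intro: deque_dominates_orI)
  next
    fix t1 :: nat and s1 :: st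
    assume "\<exists>T'. s1 = s\<lparr>nmem := (nmem s)((7,2) := T')\<rparr> \<and> head s \<le> T' \<and> T' \<le> tail s \<and>
       mono_deque (deque s) (Ftab s) (head s) T' x \<and>
       deque_dominates_or (deque s) (Ftab s) (head s) T' (brk s) x x \<and>
       (head s < T' \<longrightarrow> Ftab s (deque s (T' - 1)) < Ftab s x) \<and> t1 + 2 * T' \<le> 2 * tail s + 1"
    then obtain T' where s1: "s1 = s\<lparr>nmem := (nmem s)((7,2) := T')\<rparr>"
      and T': "head s \<le> T'" "T' \<le> tail s"
      and popped: "mono_deque (deque s) (Ftab s) (head s) T' x"
        "deque_dominates_or (deque s) (Ftab s) (head s) T' (brk s) x x"
        "head s < T' \<longrightarrow> Ftab s (deque s (T' - 1)) < Ftab s x"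
      and t1: "t1 + 2 * T' \<le> 2 * tail s + 1"
      by blast
    define s2 where "s2 = s\<lparr>nmem := (nmem s)((7,2) := T', (6,T') := x, (7,2) := Suc T')\<rparr>"
    have above: "deque_above (deque s) (head s) T' (brk s)"
      using inv T' unfolding window_inv_def by (auto intro: deque_above_shrink)
    have b: "brk s \<le> x" using inv unfolding window_inv_def by simp
    note pushed = deque_push[OF popped(1) T'(1) popped(3) popped(2) above b]
    have "Qp x \<le> Qp (Suc x)" using Qp_mono j by simp
    then have "\<forall>i<brk s. Qp i < Qp (Suc x) - Q" using inv unfolding window_inv_def by force
    then have "window_pushed (Suc x) s2"
      using ready inv FH pushed T' b
      unfolding s2_def window_pushed_def dp_ready_def window_inv_def sums_stored_def FH_stored_def
      by simp
    moreover have "runs_to push_back s1 (\<lambda>t s'. t = 2 \<and> s' = s2)"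
      unfolding push_back_def
      by (rule runs_to_Seq runs_to_NAssign)+ (simp add: s1 s2_def j)
    moreover have "t1 + 2 + window_potential s2 \<le> window_potential s + 7"
      using t1 T' by (simp add: window_potential_def s2_def; arith)
    ultimately show "runs_to push_back s1 (\<lambda>t2 s2'. window_pushed (Suc x) s2' \<and>
       t1 + t2 + window_potential s2' \<le> window_potential s + 7)"
      by (auto elim!: runs_to_mono)
  qed
qed

lemma advance_break_spec:
  assumes inv: "window_inv j s" and j: "jreg s = j" "j \<le> n"
  shows "runs_to advance_break s (\<lambda>t s'. \<exists>b' bi' bh'.
     nmem s' = (nmem s)((7,3) := b', (7,4) := bi') \<and> rmem s' = (rmem s)((11,0) := bh') \<and>
     brk s \<le> b' \<and> b' \<le> j \<and> (\<forall>i<b'. Qp i < Qp j - Q) \<and> Qp j - Q \<le> Qp b' \<and>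
     prefix_argmin (Htab s) b' bi' bh' \<and> t + 5 * (n + 1 - b') \<le> 5 * (n + 1 - brk s) + 1)"
proof -
  have Q: "rmem s (0,0) = Q" and Qs: "\<forall>i\<le>n. rmem s (7,i) = Qp i"
    using inv unfolding window_inv_def sums_stored_def by auto
  have swap: "(nmem s)((7,4) := y, (7,3) := x) = (nmem s)((7,3) := x, (7,4) := y)" for x y
    by (rule fun_upd_twist) simp
  show ?thesis
    unfolding advance_break_def
    apply (rule runs_to_mono[OF runs_to_While[where
          I="\<lambda>s'. \<exists>b' bi' bh'. nmem s' = (nmem s)((7,3) := b', (7,4) := bi') \<and>
            rmem s' = (rmem s)((11,0) := bh') \<and> brk s \<le> b' \<and> b' \<le> j \<and>
            (\<forall>i<b'. Qp i < Qp j - Q) \<and> prefix_argmin (Htab s) b' bi' bh'"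
          and pot="\<lambda>s'. 5 * (n + 1 - brk s')"]])
    subgoal using inv j unfolding window_inv_def by (intro exI[of _ "brk s"] exI) auto
    subgoal for s'
    proof (elim exE conjE)
      fix b' bi' bh'
      assume nm: "nmem s' = (nmem s)((7,3) := b', (7,4) := bi')" and rm: "rmem s' = (rmem s)((11,0) := bh')"
        and b: "brk s \<le> b'" "b' \<le> j" and below: "\<forall>i<b'. Qp i < Qp j - Q"
        and pa: "prefix_argmin (Htab s) b' bi' bh'"
        and cond: "beval (RLess (RL 7 bv) (RSub (RL 7 jv) (RL 0 (NC 0)))) s'"
      have "Qp b' < Qp j - Q" using cond nm rm Q Qs j b by simp
      then have "b' < j" and below': "\<forall>i<Suc b'. Qp i < Qp j - Q"
        using capacity_nonneg b below by (cases "b' = j", auto simp: less_Suc_eq)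
      show "runs_to (Seq (If (BOr (NEq bv (NC 0)) (RLess (RL 10 bv) (RL 11 (NC 0))))
           (Seq (RAssign 11 (NC 0) (RL 10 bv)) (NAssign 7 (NC 4) bv)) Skip)
          (NAssign 7 (NC 3) (NAdd bv (NC 1)))) s'
        (\<lambda>t s''. (\<exists>b' bi' bh'. nmem s'' = (nmem s)((7,3) := b', (7,4) := bi') \<and>
            rmem s'' = (rmem s)((11,0) := bh') \<and> brk s \<le> b' \<and> b' \<le> j \<and>
            (\<forall>i<b'. Qp i < Qp j - Q) \<and> prefix_argmin (Htab s) b' bi' bh') \<and>
          t + 5 * (n + 1 - brk s'') < 5 * (n + 1 - brk s'))"
        apply (rule runs_to_Seq, rule runs_to_If)
        subgoal
          apply (intro runs_to_Seq runs_to_RAssign runs_to_NAssign conjI)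
           apply (rule exI[of _ "Suc b'"], rule exI[of _ b'], rule exI[of _ "rmem s (10, b')"])
          using prefix_argmin_new[OF pa] nm rm \<open>b' < j\<close> j b below' swap by auto
        subgoal
          apply (intro runs_to_Skip runs_to_NAssign conjI)
           apply (rule exI[of _ "Suc b'"], rule exI[of _ bi'], rule exI[of _ bh'])
          using prefix_argmin_keep[OF pa] nm rm \<open>b' < j\<close> j b below' swap by auto
        done
    qed
    subgoal for t s'
      using Q Qs j by (elim exE conjE) (auto intro!: exI)
    done
qed

lemma advance_window_spec:
  assumes stage: "window_pushed j s"
  shows "runs_to (Seq advance_break pop_front_outside) s (\<lambda>t s'. window_advanced j s' \<and>
     t + window_potential s' \<le> window_potential s + 2)"
proof -
  have ready: "dp_ready j s" and inv: "window_inv j s" and j: "jreg s = j" "j \<le> n"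
    using stage unfolding window_pushed_def dp_ready_def by auto
  show ?thesis
  proof (rule runs_to_SeqI[OF advance_break_spec[OF inv j]])
    fix t1 :: nat and s1 :: st
    assume "\<exists>b' bi' bh'. nmem s1 = (nmem s)((7,3) := b', (7,4) := bi') \<and>
       rmem s1 = (rmem s)((11,0) := bh') \<and> brk s \<le> b' \<and> b' \<le> j \<and> (\<forall>i<b'. Qp i < Qp j - Q) \<and>
       Qp j - Q \<le> Qp b' \<and> prefix_argmin (Htab s) b' bi' bh' \<and>
       t1 + 5 * (n + 1 - b') \<le> 5 * (n + 1 - brk s) + 1"
    then obtain b' bi' bh' where nm: "nmem s1 = (nmem s)((7,3) := b', (7,4) := bi')"
      and rm: "rmem s1 = (rmem s)((11,0) := bh')" and b: "brk s \<le> b'" "b' \<le> j"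
      and below: "\<forall>i<b'. Qp i < Qp j - Q" and above: "Qp j - Q \<le> Qp b'"
      and pa: "prefix_argmin (Htab s) b' bi' bh'"
      and t1: "t1 + 5 * (n + 1 - b') \<le> 5 * (n + 1 - brk s) + 1"
      by blast
    have deque: "head s1 \<le> tail s1" "mono_deque (deque s1) (Ftab s1) (head s1) (tail s1) j"
      "deque_dominates (deque s1) (Ftab s1) (head s1) (tail s1) (brk s1) j"
      using inv b(1) nm rm unfolding window_inv_def by (auto intro: deque_dominates_mono)
    show "runs_to pop_front_outside s1 (\<lambda>t2 s2. window_advanced j s2 \<and>
       t1 + t2 + window_potential s2 \<le> window_potential s + 2)"
    proof (rule runs_to_mono[OF pop_front_outside_spec[OF deque]], elim exE conjE)
      fix t2 s2 H'
      assume s2: "s2 = s1\<lparr>nmem := (nmem s1)((7,1) := H')\<rparr>" and H': "head s1 \<le> H'" "H' \<le> tail s1"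
        and popped: "mono_deque (deque s1) (Ftab s1) H' (tail s1) j"
          "deque_dominates (deque s1) (Ftab s1) H' (tail s1) (brk s1) j"
          "deque_above (deque s1) H' (tail s1) (brk s1)"
        and t2: "t2 + 2 * (tail s1 - H') \<le> 2 * (tail s1 - head s1) + 1"
      have "window_advanced j s2"
        using ready inv s2 nm rm b below above pa popped H'
        unfolding window_advanced_def dp_ready_def window_inv_def sums_stored_def FH_stored_def
        by simp
      moreover have "t1 + t2 + window_potential s2 \<le> window_potential s + 2"
        using t1 t2 H' b nm s2 by (simp add: window_potential_def; arith)
      ultimately show "window_advanced j s2 \<and> t1 + t2 + window_potential s2 \<le> window_potential s + 2"
        by simp
    qed
  qed
qed

lemma arc_cost_via_F:
  assumes "FH_stored s j" "i < j"
  shows "Ptab s i + c i j = Dp j + dback j + Ftab s i + \<alpha> * max (Qp j - Qp i - Q) 0"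
  using assms unfolding FH_stored_def arc_cost_def by auto

lemma brk_arg_optimal:
  assumes inv: "window_inv j s" and b: "0 < brk s"
  shows "brk_arg s < brk s"
    and "Ptab s (brk_arg s) + c (brk_arg s) j = Dp j + dback j + (brk_min s + \<alpha> * (Qp j - Q))"
    and "i < brk s \<Longrightarrow> Ptab s (brk_arg s) + c (brk_arg s) j \<le> Ptab s i + c i j"
proof -
  have pa: "brk_arg s < brk s" "brk_min s = Htab s (brk_arg s)" "\<forall>i<brk s. brk_min s \<le> Htab s i"
    using inv b unfolding window_inv_def prefix_argmin_def by auto
  text \<open>Below the break point the overload penalty is active, so the cost is H[i] plus a constant.\<close>
  have cost: "Ptab s i + c i j = Dp j + dback j + (Htab s i + \<alpha> * (Qp j - Q))" if "i < brk s" for i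
  proof -
    have "i < j" "Qp i < Qp j - Q" "FH_stored s j" using inv that unfolding window_inv_def by auto
    moreover from this have "Htab s i = Ftab s i - \<alpha> * Qp i" unfolding FH_stored_def by simp
    ultimately show ?thesis using arc_cost_via_F[of s j i] by (simp add: algebra_simps)
  qed
  show "brk_arg s < brk s" by (fact pa(1))
  show "Ptab s (brk_arg s) + c (brk_arg s) j = Dp j + dback j + (brk_min s + \<alpha> * (Qp j - Q))"
    using cost[OF pa(1)] pa(2) by simp
  show "Ptab s (brk_arg s) + c (brk_arg s) j \<le> Ptab s i + c i j" if "i < brk s"
    using cost[OF pa(1)] cost[OF that] pa(2,3) that by simp
qed

lemma deque_front_optimal:
  assumes inv: "window_inv j s" and b: "Qp j - Q \<le> Qp (brk s)" and ne: "head s < tail s"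
    and j: "j \<le> n"
  defines "f \<equiv> deque s (head s)"
  shows "brk s \<le> f" and "f < j" and "Ptab s f + c f j = Dp j + dback j + Ftab s f"
    and "brk s \<le> i \<Longrightarrow> i < j \<Longrightarrow> Ptab s f + c f j \<le> Ptab s i + c i j"
proof -
  have deque: "mono_deque (deque s) (Ftab s) (head s) (tail s) j"
    "deque_dominates (deque s) (Ftab s) (head s) (tail s) (brk s) j"
    using inv unfolding window_inv_def by auto
  have FH: "FH_stored s j" using inv unfolding window_inv_def by simp
  text \<open>From the break point on, the overload penalty vanishes.\<close>
  have cost: "Ptab s i + c i j = Dp j + dback j + Ftab s i" if "brk s \<le> i" "i < j" for i
  proof -
    have "Qp (brk s) \<le> Qp i" using Qp_mono that j by simp
    then show ?thesis using arc_cost_via_F[OF FH that(2)] b by simp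
  qed
  show "brk s \<le> f" using inv ne unfolding window_inv_def deque_above_def f_def by auto
  moreover show "f < j" using deque(1) ne unfolding mono_deque_def f_def by auto
  ultimately show "Ptab s f + c f j = Dp j + dback j + Ftab s f" by (rule cost)
  show "Ptab s f + c f j \<le> Ptab s i + c i j" if "brk s \<le> i" "i < j"
    using cost[OF \<open>brk s \<le> f\<close> \<open>f < j\<close>] cost[OF that] deque_front_min[OF deque that]
    unfolding f_def by simp
qed

text \<open>It suffices to beat the two candidates: the argmin below the break point and the front
  of the deque.\<close>

lemma bellman_table_extend_candidates:
  assumes stage: "window_advanced j s" and p: "p < j"
    and prefix: "0 < brk s \<Longrightarrow> Ptab s p + c p j \<le> Ptab s (brk_arg s) + c (brk_arg s) j"
    and window: "head s < tail s \<Longrightarrow>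
      Ptab s p + c p j \<le> Ptab s (deque s (head s)) + c (deque s (head s)) j"
  shows "bellman_table c ((Ptab s)(j := Ptab s p + c p j)) ((pred s)(j := p)) (Suc j)"
proof -
  have inv: "window_inv j s" and b: "Qp j - Q \<le> Qp (brk s)" and P: "bellman_table c (Ptab s) (pred s) j"
    and j: "1 \<le> j" "j \<le> n"
    using stage unfolding window_advanced_def dp_ready_def by auto
  show ?thesis
  proof (rule bellman_table_extend[OF P _ p refl])
    show "0 < j" using j by simp
    show "\<forall>k<j. Ptab s p + c p j \<le> Ptab s k + c k j"
    proof (intro allI impI)
      fix k assume k: "k < j"
      show "Ptab s p + c p j \<le> Ptab s k + c k j"
      proof (cases "k < brk s")
        case True
        then show ?thesis using prefix brk_arg_optimal(3)[OF inv _ True] by force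
      next
        case False
        have "deque_dominates (deque s) (Ftab s) (head s) (tail s) (brk s) j"
          using inv unfolding window_inv_def by simp
        from deque_empty_window[OF this] have ne: "head s < tail s" using False k by linarith
        have "Ptab s (deque s (head s)) + c (deque s (head s)) j \<le> Ptab s k + c k j"
          using deque_front_optimal(4)[OF inv b ne j(2)] False k by simp
        then show ?thesis using window[OF ne] by linarith
      qed
    qed
  qed
qed

lemma choose_pred_spec:
  assumes stage: "window_advanced j s"
  shows "runs_to choose_pred s (\<lambda>t s'. t \<le> 4 \<and> (\<exists>p v. nmem s' = (nmem s)((5,j) := p) \<and>
     rmem s' = (rmem s)((8,j) := v) \<and> bellman_table c ((Ptab s)(j := v)) ((pred s)(j := p)) (Suc j)))"
proof -
  have inv: "window_inv j s" and b: "Qp j - Q \<le> Qp (brk s)" and j: "jreg s = j" "1 \<le> j" "j \<le> n"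
    using stage unfolding window_advanced_def dp_ready_def by auto
  define f where "f = deque s (head s)"
  define bi where "bi = brk_arg s"
  note extend = bellman_table_extend_candidates[OF stage, folded f_def bi_def]
  note front = deque_front_optimal[OF inv b _ j(3), folded f_def]
  note prefix = brk_arg_optimal[OF inv, folded bi_def]
  have base: "rmem s (6,j) + rmem s (3,j) = Dp j + dback j"
    and prefix_value: "brk_min s + rmem s (0, Suc 0) * (rmem s (7,j) - rmem s (0,0))
      = brk_min s + \<alpha> * (Qp j - Q)"
    using inv j unfolding window_inv_def sums_stored_def by (auto simp: input_intactD(3))
  have use_prefix: "runs_to use_prefix_min s (\<lambda>t s'. t \<le> 2 \<and> (\<exists>p v. nmem s' = (nmem s)((5,j) := p) \<and>
     rmem s' = (rmem s)((8,j) := v) \<and> bellman_table c ((Ptab s)(j := v)) ((pred s)(j := p)) (Suc j)))"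
    if b0: "0 < brk s" and le: "head s < tail s \<Longrightarrow> Ptab s bi + c bi j \<le> Ptab s f + c f j"
    unfolding use_prefix_min_def
    apply (rule runs_to_Seq runs_to_RAssign runs_to_NAssign)+
    using extend[of bi] prefix(1,2)[OF b0] le base prefix_value inv j
    unfolding bi_def window_inv_def by (auto intro!: exI)
  have use_window: "runs_to use_window_min s (\<lambda>t s'. t \<le> 2 \<and> (\<exists>p v. nmem s' = (nmem s)((5,j) := p) \<and>
     rmem s' = (rmem s)((8,j) := v) \<and> bellman_table c ((Ptab s)(j := v)) ((pred s)(j := p)) (Suc j)))"
    if ne: "head s < tail s" and le: "0 < brk s \<Longrightarrow> Ptab s f + c f j \<le> Ptab s bi + c bi j"
    unfolding use_window_min_def
    apply (rule runs_to_Seq runs_to_RAssign runs_to_NAssign)+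
    using extend[of f] front(2,3)[OF ne] le base j unfolding f_def by (auto intro!: exI)
  have "deque_dominates (deque s) (Ftab s) (head s) (tail s) (brk s) j"
    using inv unfolding window_inv_def by simp
  from deque_empty_window[OF this] have empty: "0 < brk s" if "\<not> head s < tail s"
    using that j by linarith
  show ?thesis
    unfolding choose_pred_def
    apply (rule runs_to_If)
     apply (rule runs_to_If)
    subgoal
      by (rule runs_to_mono[OF use_prefix])
        (use prefix(2) front(3) base prefix_value j in \<open>auto simp: f_def\<close>)
    subgoal
      by (rule runs_to_mono[OF use_window])
        (use prefix(2) front(3) base prefix_value j in \<open>auto simp: f_def\<close>)
    subgoal
      by (rule runs_to_mono[OF use_prefix]) (use empty in auto)
    done
qed

lemma choose_step_spec:
  assumes stage: "window_advanced j s"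
  shows "runs_to (Seq choose_pred next_vertex) s (\<lambda>t s'. (dp_inv s' \<and> jreg s' = Suc j) \<and>
     t + window_potential s' \<le> window_potential s + 5)"
proof (rule runs_to_SeqI[OF choose_pred_spec[OF stage]], elim conjE exE)
  fix t1 :: nat and s1 :: st and p v
  assume t1: "t1 \<le> 4" and nm: "nmem s1 = (nmem s)((5,j) := p)" and rm: "rmem s1 = (rmem s)((8,j) := v)"
    and P: "bellman_table c ((Ptab s)(j := v)) ((pred s)(j := p)) (Suc j)"
  have inv: "window_inv j s" and j: "jreg s = j" "1 \<le> j" "j \<le> n"
    using stage unfolding window_advanced_def dp_ready_def by auto
  define s2 where "s2 = s1\<lparr>nmem := (nmem s1)((7,0) := Suc j)\<rparr>"
  have "\<forall>i<j. (8, i) \<noteq> (8, j)" by simp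
  then have "dp_inv s2 \<and> jreg s2 = Suc j"
    using inv j P nm rm
    unfolding s2_def dp_inv_def window_inv_def sums_stored_def FH_stored_def by simp
  moreover have "window_potential s2 = window_potential s"
    using nm unfolding s2_def window_potential_def by simp
  ultimately show "runs_to next_vertex s1 (\<lambda>t2 s2'. (dp_inv s2' \<and> jreg s2' = Suc j) \<and>
     t1 + t2 + window_potential s2' \<le> window_potential s + 5)"
    unfolding next_vertex_def using t1 nm j by (intro runs_to_NAssign) (simp add: s2_def)
qed

lemma dp_step_spec:
  assumes inv: "dp_inv s" and more: "jreg s < n + 1"
  shows "runs_to dp_step s (\<lambda>t s'. dp_inv s' \<and> t + dp_potential s' < dp_potential s)"
proof -
  obtain x where x: "jreg s = Suc x" using inv unfolding dp_inv_def by (cases "jreg s") auto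
  have ready: "dp_ready (Suc x) s" and win: "window_inv x s"
    using inv more x unfolding dp_inv_def dp_ready_def by auto
  have "runs_to dp_step s (\<lambda>t s'. (dp_inv s' \<and> jreg s' = Suc (Suc x)) \<and>
     t + window_potential s' \<le> window_potential s + (2 + (7 + (2 + 5))))"
    unfolding dp_step_def
    by (rule runs_to_Seq_amortized[OF compute_F_H_spec[OF ready win]
          runs_to_Seq_amortized[OF push_window_spec
            runs_to_Seq_amortized[OF advance_window_spec choose_step_spec]]])
  then show ?thesis
    by (rule runs_to_mono) (use x more in \<open>auto simp: dp_potential_def\<close>)
qed

lemma dp_loop_spec:
  "timed_triple (\<lambda>s. dp_inv s \<and> dp_potential s = 25 * n + 5) dp_loop
     (\<lambda>s. dp_inv s \<and> jreg s = n + 1) (25 * n + 6)"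
proof (rule timed_tripleI, elim conjE)
  have n: "nmem s (0,0) = n" if "dp_inv s" for s
    using that unfolding dp_inv_def window_inv_def by simp
  fix s assume inv: "dp_inv s" and pot: "dp_potential s = 25 * n + 5"
  have "runs_to dp_loop s (\<lambda>t s'. dp_inv s' \<and> \<not> beval (NLess jv (NAdd nv (NC 1))) s' \<and>
     t + dp_potential s' \<le> dp_potential s + 1)"
    unfolding dp_loop_def by (rule runs_to_While[where I=dp_inv, OF inv]) (simp add: n dp_step_spec)
  then show "runs_to dp_loop s (\<lambda>t s'. t \<le> 25 * n + 6 \<and> dp_inv s' \<and> jreg s' = n + 1)"
  proof (rule runs_to_mono, elim conjE)
    fix t s' assume "dp_inv s'" "\<not> beval (NLess jv (NAdd nv (NC 1))) s'"
      "t + dp_potential s' \<le> dp_potential s + 1"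
    then show "t \<le> 25 * n + 6 \<and> dp_inv s' \<and> jreg s' = n + 1"
      using n[of s'] pot unfolding dp_inv_def by auto
  qed
qed

lemma dp_init_spec:
  "timed_triple (\<lambda>s. input_intact s \<and> sums_stored s) dp_init
     (\<lambda>s. dp_inv s \<and> dp_potential s = 25 * n + 5) 5"
  unfolding dp_init_def
  by (rule timed_tripleI, (rule runs_to_Seq runs_to_RAssign runs_to_NAssign)+)
    (auto simp: dp_inv_def dp_potential_def window_potential_def window_inv_def bellman_table_def
      FH_stored_def mono_deque_def deque_above_def deque_dominates_def prefix_argmin_def sums_stored_def)

text \<open>Path reconstruction follows the predecessor pointers from n twice: once to measure the
  length m of the path, once to write it backwards into N[3,0..m].\<close>

definition measure_inv :: "(nat \<Rightarrow> nat) \<Rightarrow> nat list \<Rightarrow> (nat \<times> nat \<Rightarrow> real) \<Rightarrow> st \<Rightarrow> bool" where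
  "measure_inv pr L R s \<longleftrightarrow> pred s = pr \<and> nmem s (0,0) = n \<and> rmem s = R \<and> nmem s (7,5) \<le> n \<and>
     pred_chain pr (nmem s (7,5)) = drop (nmem s (2,0)) L"

lemma measure_path_spec:
  assumes pr_lt: "\<forall>i. 0 < i \<and> i \<le> n \<longrightarrow> pr i < i" and inv: "measure_inv pr L R s"
  shows "runs_to measure_path s (\<lambda>t s'. measure_inv pr L R s' \<and> nmem s' (7,5) = 0 \<and>
     t + 3 * nmem s' (7,5) \<le> 3 * nmem s (7,5) + 1)"
  unfolding measure_path_def
  apply (rule runs_to_mono[OF runs_to_While[where I="measure_inv pr L R" and pot="\<lambda>s. 3 * nmem s (7,5)"]])
    apply (rule inv)
  subgoal for s'
  proof -
    assume inv': "measure_inv pr L R s'" and more: "beval (NLess (NC 0) kv) s'"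
    define k where "k = nmem s' (7,5)"
    have k: "0 < k" "k \<le> n" "pred_chain pr k = drop (nmem s' (2,0)) L" "pred s' = pr"
      using inv' more unfolding measure_inv_def k_def by auto
    then have "pr k < k" "nmem s' (5,k) = pr k" using pr_lt by (auto dest: fun_cong[of _ _ k])
    moreover from this have "pred_chain pr (pr k) = drop (Suc (nmem s' (2,0))) L"
      using k pred_chain_step[of k pr] by (metis drop_Suc list.sel(3) tl_drop)
    ultimately show ?thesis
      apply (intro runs_to_Seq runs_to_NAssign)
      using inv' k unfolding measure_inv_def by (simp add: k_def[symmetric])
  qed
  by simp

definition write_inv :: "(nat \<Rightarrow> nat) \<Rightarrow> nat list \<Rightarrow> (nat \<times> nat \<Rightarrow> real) \<Rightarrow> nat \<Rightarrow> st \<Rightarrow> bool" where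
  "write_inv pr L R m s \<longleftrightarrow> pred s = pr \<and> nmem s (0,0) = n \<and> rmem s = R \<and> nmem s (2,0) = m \<and>
     length L = Suc m \<and> nmem s (7,6) \<le> m \<and> pred_chain pr (nmem s (7,5)) = drop (m - nmem s (7,6)) L \<and>
     (\<forall>i. nmem s (7,6) \<le> i \<and> i \<le> m \<longrightarrow> nmem s (3,i) = rev L ! i)"

lemma write_path_spec:
  assumes inv: "write_inv pr L R m s"
  shows "runs_to write_path s (\<lambda>t s'. write_inv pr L R m s' \<and> nmem s' (7,6) = 0 \<and>
     t + 4 * nmem s' (7,6) \<le> 4 * nmem s (7,6) + 1)"
  unfolding write_path_def
  apply (rule runs_to_mono[OF runs_to_While[where I="write_inv pr L R m" and pot="\<lambda>s. 4 * nmem s (7,6)"]])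
    apply (rule inv)
  subgoal for s'
  proof -
    assume inv': "write_inv pr L R m s'" and more: "beval (NLess (NC 0) posv) s'"
    define k where "k = nmem s' (7,5)"
    define pos where "pos = nmem s' (7,6)"
    have pos: "0 < pos" "pos \<le> m" and L: "length L = Suc m" and chain: "pred_chain pr k = drop (m - pos) L"
      and written: "\<forall>i. pos \<le> i \<and> i \<le> m \<longrightarrow> nmem s' (3,i) = rev L ! i" and pr: "pred s' = pr"
      using inv' more unfolding write_inv_def k_def pos_def by auto
    have "length (pred_chain pr k) \<ge> 2" using chain L pos by simp
    then have step: "pred_chain pr k = k # pred_chain pr (pr k)" using pred_chain_long by blast
    have next_chain: "pred_chain pr (pr k) = drop (m - (pos - 1)) L"
    proof -
      have "m - (pos - 1) = Suc (m - pos)" using pos by simp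
      then show ?thesis using chain step by (metis drop_Suc list.sel(3) tl_drop)
    qed
    have next_entry: "rev L ! (pos - 1) = pr k"
    proof -
      have "rev L ! (pos - 1) = L ! (m - (pos - 1))" using L pos by (simp add: rev_nth)
      also have "\<dots> = hd (drop (m - (pos - 1)) L)" using L by (simp add: hd_drop_conv_nth)
      also have "\<dots> = pr k" using next_chain pred_chain_hd[of pr "pr k"] by simp
      finally show ?thesis .
    qed
    have "nmem s' (5,k) = pr k" using pr by (auto dest: fun_cong[of _ _ k])
    moreover have "\<forall>i. pos - 1 \<le> i \<and> i \<le> m \<longrightarrow>
        ((nmem s')((7,5) := pr k, (7,6) := pos - 1, (3, pos - 1) := pr k)) (3,i) = rev L ! i"
    proof (intro allI impI)
      fix i assume i: "pos - 1 \<le> i \<and> i \<le> m"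
      show "((nmem s')((7,5) := pr k, (7,6) := pos - 1, (3, pos - 1) := pr k)) (3,i) = rev L ! i"
      proof (cases "i = pos - 1")
        case False
        then have "pos \<le> i" using i by arith
        then show ?thesis using written i False by simp
      qed (use next_entry in simp)
    qed
    ultimately show ?thesis
      apply (intro runs_to_Seq runs_to_NAssign)
      using inv' pos next_chain unfolding write_inv_def
      by (simp add: k_def[symmetric] pos_def[symmetric]) arith
  qed
  by simp

lemma reconstruct_output:
  assumes inp: "input_intact s" and pr_lt: "\<forall>i. 0 < i \<and> i \<le> n \<longrightarrow> pred s i < i"
  shows "runs_to reconstruct s (\<lambda>t s'. out_path s' = rev (pred_chain (pred s) n) \<and>
     rmem s' = rmem s \<and> t \<le> 7 * n + 7)"
proof -
  define L where "L = pred_chain (pred s) n"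
  have start: "measure_inv (pred s) L (rmem s) (s\<lparr>nmem := (nmem s)((7,5) := n, (2,0) := 0)\<rparr>)"
    using inp unfolding measure_inv_def L_def by simp
  have measured: "runs_to (Seq start_measure measure_path) s (\<lambda>t s'.
      measure_inv (pred s) L (rmem s) s' \<and> nmem s' (7,5) = 0 \<and> t \<le> 3 * n + 3)"
    unfolding start_measure_def
    apply (intro runs_to_Seq runs_to_NAssign)
    apply (rule runs_to_mono[OF measure_path_spec[where pr="pred s" and L=L and R="rmem s", OF pr_lt]])
    using start inp by auto
  show ?thesis
    unfolding reconstruct_def
  proof (rule runs_to_SeqI[OF measured], elim conjE)
    fix t1 :: nat and sA :: st
    assume inv: "measure_inv (pred s) L (rmem s) sA" and finished: "nmem sA (7,5) = 0" and t1: "t1 \<le> 3 * n + 3"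
    define m where "m = nmem sA (2,0)"
    have "drop m L = [0]"
      using inv finished pred_chain.simps[of "pred s" 0] unfolding measure_inv_def m_def by simp
    then have "length L - m = 1" using length_drop[of m L] by simp
    then have L: "length L = Suc m" by arith
    have "m \<le> n" using length_pred_chain_le[of "pred s" n] L L_def by simp
    have "rev L ! m = n"
      using L pred_chain_hd[of "pred s" n] hd_conv_nth[of L] by (simp add: L_def rev_nth)
    then have "write_inv (pred s) L (rmem s) m
        (sA\<lparr>nmem := (nmem sA)((7,5) := n, (7,6) := m, (3,m) := n)\<rparr>)"
      using inv L m_def unfolding write_inv_def measure_inv_def L_def by auto
    then have "runs_to (Seq start_write write_path) sA (\<lambda>t sF. write_inv (pred s) L (rmem s) m sF \<and>
        nmem sF (7,6) = 0 \<and> t \<le> 4 * m + 4)"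
      unfolding start_write_def using inv m_def
      by (intro runs_to_Seq runs_to_NAssign runs_to_mono[OF write_path_spec])
        (auto simp: measure_inv_def)
    then show "runs_to (Seq start_write write_path) sA (\<lambda>t2 sF.
        out_path sF = rev (pred_chain (pred s) n) \<and> rmem sF = rmem s \<and> t1 + t2 \<le> 7 * n + 7)"
    proof (rule runs_to_mono, elim conjE)
      fix t2 sF assume "write_inv (pred s) L (rmem s) m sF" "nmem sF (7,6) = 0" "t2 \<le> 4 * m + 4"
      moreover from this have "out_path sF = rev L"
        unfolding out_path_def write_inv_def by (auto intro: nth_equalityI simp del: upt_Suc)
      ultimately show "out_path sF = rev (pred_chain (pred s) n) \<and> rmem sF = rmem s \<and> t1 + t2 \<le> 7 * n + 7"
        using t1 \<open>m \<le> n\<close> unfolding write_inv_def L_def by simp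
    qed
  qed
qed

definition dp_done :: "st \<Rightarrow> bool" where
  "dp_done s \<longleftrightarrow> input_intact s \<and> bellman_table c (Ptab s) (pred s) (Suc n) \<and> out_cost s = Ptab s n"

definition split_solved :: "st \<Rightarrow> bool" where
  "split_solved s \<longleftrightarrow> is_path n (out_path s) \<and> out_cost s = path_cost c (out_path s) \<and>
     (\<forall>p. is_path n p \<longrightarrow> path_cost c (out_path s) \<le> path_cost c p)"

lemma store_cost_spec: "timed_triple (\<lambda>s. dp_inv s \<and> jreg s = n + 1) store_cost dp_done 1"
  unfolding store_cost_def
  by (rule timed_tripleI, rule runs_to_RAssign)
    (auto simp: dp_inv_def dp_done_def window_inv_def out_cost_def)

lemma reconstruct_spec: "timed_triple dp_done reconstruct split_solved (7 * n + 7)"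
proof (rule timed_tripleI)
  fix s assume "dp_done s"
  then have inp: "input_intact s" and P: "bellman_table c (Ptab s) (pred s) (Suc n)"
    and cost: "out_cost s = Ptab s n"
    unfolding dp_done_def by auto
  have "\<forall>i. 0 < i \<and> i \<le> n \<longrightarrow> pred s i < i" using P unfolding bellman_table_def by auto
  with inp show "runs_to reconstruct s (\<lambda>t s'. t \<le> 7 * n + 7 \<and> split_solved s')"
  proof (rule runs_to_mono[OF reconstruct_output], elim conjE)
    fix t s' assume out: "out_path s' = rev (pred_chain (pred s) n)" "rmem s' = rmem s" "t \<le> 7 * n + 7"
    have "is_path n (out_path s') \<and> path_cost c (out_path s') = Ptab s n"
      using pred_chain_shortest_path[OF P, of n] out(1) by simp
    moreover have "\<forall>p. is_path n p \<longrightarrow> Ptab s n \<le> path_cost c p"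
      using bellman_table_le_path_cost[OF P] unfolding is_path_def by fastforce
    ultimately show "t \<le> 7 * n + 7 \<and> split_solved s'"
      using out cost unfolding split_solved_def out_cost_def by simp
  qed
qed

lemma split_program_spec: "timed_triple input_intact split_program split_solved (100 * n)"
  unfolding split_program_def
  by (rule timed_triple_weaken[OF timed_triple_Seq[OF prefix_sums_spec timed_triple_Seq[OF dp_init_spec
        timed_triple_Seq[OF dp_loop_spec timed_triple_Seq[OF store_cost_spec reconstruct_spec]]]]])
    (use n_pos in simp)

end

theorem mainTheorem4:
  shows "\<exists>(P :: com) (C :: nat).
    \<forall>(n :: nat) (Q :: real) (\<alpha> :: real) (q :: nat \<Rightarrow> real)
      (d0 :: nat \<Rightarrow> real) (dback :: nat \<Rightarrow> real) (dnext :: nat \<Rightarrow> real).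
      n \<ge> 1 \<longrightarrow> Q \<ge> 0 \<longrightarrow> \<alpha> \<ge> 0 \<longrightarrow> (\<forall>i \<in> {1..n}. q i \<ge> 0) \<longrightarrow>
      (\<exists>t s'. exec P (init_state n Q \<alpha> q d0 dback dnext) t s' \<and> t \<le> C * n \<and>
         is_path n (out_path s') \<and>
         out_cost s' = path_cost (arc_cost Q \<alpha> q d0 dback dnext) (out_path s') \<and>
         (\<forall>p. is_path n p \<longrightarrow>
            path_cost (arc_cost Q \<alpha> q d0 dback dnext) (out_path s')
              \<le> path_cost (arc_cost Q \<alpha> q d0 dback dnext) p))"
proof (rule exI[of _ split_program], rule exI[of _ 100], intro allI impI)
  fix n :: nat and Q \<alpha> :: real and q d0 dback dnext :: "nat \<Rightarrow> real"
  assume "n \<ge> 1" "Q \<ge> 0" "\<alpha> \<ge> 0" "\<forall>i \<in> {1..n}. q i \<ge> 0"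
  interpret split_instance n Q \<alpha> q d0 dback dnext
    using \<open>n \<ge> 1\<close> \<open>Q \<ge> 0\<close> \<open>\<forall>i \<in> {1..n}. q i \<ge> 0\<close> by unfold_locales
  show "\<exists>t s'. exec split_program (init_state n Q \<alpha> q d0 dback dnext) t s' \<and> t \<le> 100 * n \<and>
     is_path n (out_path s') \<and> out_cost s' = path_cost c (out_path s') \<and>
     (\<forall>p. is_path n p \<longrightarrow> path_cost c (out_path s') \<le> path_cost c p)"
    using split_program_spec input_intact_init
    unfolding timed_triple_def runs_to_def split_solved_def by blast
qed

end
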